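(* Let $\Gamma_1$ be a connected highly-regular graph which is not distance-regular, and let $\Gamma_2$ be a connected highly-regular graph. Then the Cartesian product $\Gamma_1\Box\Gamma_2$ is a connected highly-regular graph which is not distance-regular.
   Context: The Cartesian product $\Gamma_1\Box\Gamma_2$ has vertex set $V(\Gamma_1)\times V(\Gamma_2)$, with $(u_1,v_1)\sim(u_2,v_2)$ iff ($u_1=u_2$ and $v_1\sim v_2$) or ($v_1=v_2$ and $u_1\sim u_2$). A graph $\Gamma$ of order $n$ is highly-regular with collapsed adjacency matrix $C=[c_{i,j}]_{1\le i,j\le m}$, where $2\le m<n$ (the value $m=n$ allowed only when $n=2$), if for every vertex $u$ there is a partition of $V(\Gamma)$ into nonempty sets $V_1(u)=\{u\},\dots,V_m(u)$ such that every $y\in V_j(u)$ is adjacent to exactly $c_{i,j}$ vertices of $V_i(u)$. A connected graph is distance-regular if for all $u,v$ the numbers $|D_1(v)\cap D_{i-1}(u)|$, $|D_1(v)\cap D_i(u)|$, $|D_1(v)\cap D_{i+1}(u)|$ depend only on $i=d(u,v)$, where $D_i(u)=\{v:d(u,v)=i\}$. *)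

theory Defs
  imports Main
begin

definition simple_graph :: "'a set \<Rightarrow> ('a \<Rightarrow> 'a \<Rightarrow> bool) \<Rightarrow> bool" where
  "simple_graph V E \<longleftrightarrow> finite V \<and> (\<forall>x y. E x y \<longrightarrow> x \<in> V \<and> y \<in> V)
     \<and> (\<forall>x y. E x y \<longrightarrow> E y x) \<and> (\<forall>x. \<not> E x x)"

definition is_walk :: "'a set \<Rightarrow> ('a \<Rightarrow> 'a \<Rightarrow> bool) \<Rightarrow> 'a list \<Rightarrow> bool" where
  "is_walk V E xs \<longleftrightarrow> xs \<noteq> [] \<and> set xs \<subseteq> V \<and>
     (\<forall>i. Suc i < length xs \<longrightarrow> E (xs ! i) (xs ! Suc i))"

definition connected_graph :: "'a set \<Rightarrow> ('a \<Rightarrow> 'a \<Rightarrow> bool) \<Rightarrow> bool" where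
  "connected_graph V E \<longleftrightarrow> V \<noteq> {} \<and>
     (\<forall>u\<in>V. \<forall>v\<in>V. \<exists>xs. is_walk V E xs \<and> hd xs = u \<and> last xs = v)"

definition gdist :: "'a set \<Rightarrow> ('a \<Rightarrow> 'a \<Rightarrow> bool) \<Rightarrow> 'a \<Rightarrow> 'a \<Rightarrow> nat" where
  "gdist V E u v = (LEAST n. \<exists>xs. is_walk V E xs \<and> hd xs = u \<and> last xs = v \<and> length xs = Suc n)"

definition dist_set :: "'a set \<Rightarrow> ('a \<Rightarrow> 'a \<Rightarrow> bool) \<Rightarrow> 'a \<Rightarrow> nat \<Rightarrow> 'a set" where
  "dist_set V E u i = {v \<in> V. gdist V E u v = i}"

definition nbhd :: "'a set \<Rightarrow> ('a \<Rightarrow> 'a \<Rightarrow> bool) \<Rightarrow> 'a \<Rightarrow> 'a set" where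
  "nbhd V E v = {w \<in> V. E v w}"

text \<open>Distance-regular: connected, and |D_1(v) \<inter> D_{i-1}(u)|, |D_1(v) \<inter> D_i(u)|,
|D_1(v) \<inter> D_{i+1}(u)| depend only on i = d(u,v).  (For i = 0 the set D_{i-1}(u)
is empty; here i - 1 = 0 gives D_0(u) = {u}, and D_1(u) \<inter> {u} = {} anyway.)\<close>
definition distance_regular :: "'a set \<Rightarrow> ('a \<Rightarrow> 'a \<Rightarrow> bool) \<Rightarrow> bool" where
  "distance_regular V E \<longleftrightarrow> connected_graph V E \<and>
     (\<forall>u\<in>V. \<forall>v\<in>V. \<forall>u'\<in>V. \<forall>v'\<in>V. gdist V E u v = gdist V E u' v' \<longrightarrow>
        (let i = gdist V E u v in
          card (nbhd V E v \<inter> dist_set V E u (i - 1)) = card (nbhd V E v' \<inter> dist_set V E u' (i - 1)) \<and>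
          card (nbhd V E v \<inter> dist_set V E u i) = card (nbhd V E v' \<inter> dist_set V E u' i) \<and>
          card (nbhd V E v \<inter> dist_set V E u (Suc i)) = card (nbhd V E v' \<inter> dist_set V E u' (Suc i))))"

definition highly_regular_with :: "'a set \<Rightarrow> ('a \<Rightarrow> 'a \<Rightarrow> bool) \<Rightarrow> nat \<Rightarrow> (nat \<Rightarrow> nat \<Rightarrow> nat) \<Rightarrow> bool" where
  "highly_regular_with V E m C \<longleftrightarrow>
     2 \<le> m \<and> (m < card V \<or> (m = card V \<and> card V = 2)) \<and>
     (\<forall>u\<in>V. \<exists>P :: nat \<Rightarrow> 'a set.
        (\<forall>i\<in>{1..m}. P i \<noteq> {} \<and> P i \<subseteq> V) \<and>
        (\<forall>i\<in>{1..m}. \<forall>j\<in>{1..m}. i \<noteq> j \<longrightarrow> P i \<inter> P j = {}) \<and>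
        (\<Union>i\<in>{1..m}. P i) = V \<and>
        P 1 = {u} \<and>
        (\<forall>i\<in>{1..m}. \<forall>j\<in>{1..m}. \<forall>y\<in>P j. card {x \<in> P i. E y x} = C i j))"

definition highly_regular :: "'a set \<Rightarrow> ('a \<Rightarrow> 'a \<Rightarrow> bool) \<Rightarrow> bool" where
  "highly_regular V E \<longleftrightarrow> (\<exists>m C. highly_regular_with V E m C)"

definition cart_prod_adj :: "('a \<Rightarrow> 'a \<Rightarrow> bool) \<Rightarrow> ('b \<Rightarrow> 'b \<Rightarrow> bool) \<Rightarrow> 'a \<times> 'b \<Rightarrow> 'a \<times> 'b \<Rightarrow> bool" where
  "cart_prod_adj E1 E2 p q \<longleftrightarrow>
     (fst p = fst q \<and> E2 (snd p) (snd q)) \<or> (snd p = snd q \<and> E1 (fst p) (fst q))"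

end

theory Submission
  imports Defs
begin

text \<open>Distances in \<open>\<Gamma>\<^sub>1 \<box> \<Gamma>\<^sub>2\<close> add up, so the neighbours of \<open>(v, w)\<close> at a given distance from \<open>(u, w)\<close>
are those of \<open>v\<close> relative to \<open>u\<close> in \<open>\<Gamma>\<^sub>1\<close>, plus, one level further out, the \<open>\<Gamma>\<^sub>2\<close>-neighbours of
\<open>w\<close>. Comparing two pairs \<open>(u, v)\<close>, \<open>(u', v')\<close> of \<open>\<Gamma>\<^sub>1\<close> at equal distance, the extra
\<open>\<Gamma>\<^sub>2\<close>-term is the same on both sides, so distance-regularity of the product would
force that of \<open>\<Gamma>\<^sub>1\<close>. High regularity passes to the product via the product partitions
\<open>V\<^sub>i(u\<^sub>1) \<times> V\<^sub>j(u\<^sub>2)\<close>; the only subtle point is the size condition \<open>m < n\<close>, which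
fails only if \<open>\<Gamma>\<^sub>1 = K\<^sub>2\<close>, and \<open>K\<^sub>2\<close> is distance-regular.\<close>

lemma is_walk_Nil [simp]: "\<not> is_walk V E []"
  by (simp add: is_walk_def)

lemma is_walk_single [simp]: "is_walk V E [x] \<longleftrightarrow> x \<in> V"
  by (simp add: is_walk_def)

lemma is_walk_Cons2 [simp]: "is_walk V E (x # y # xs) \<longleftrightarrow> x \<in> V \<and> E x y \<and> is_walk V E (y # xs)"
  unfolding is_walk_def by (auto simp: less_Suc_eq_0_disj)

lemma is_walk_append_tl:
  "is_walk V E xs \<Longrightarrow> is_walk V E ys \<Longrightarrow> last xs = hd ys \<Longrightarrow> is_walk V E (xs @ tl ys)"
proof (induction xs rule: induct_list012)
  case (2 x)
  then show ?case by (cases ys) auto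
qed auto

lemma last_append_tl: "xs \<noteq> [] \<Longrightarrow> ys \<noteq> [] \<Longrightarrow> last xs = hd ys \<Longrightarrow> last (xs @ tl ys) = last ys"
  by (cases ys) (auto simp: last_append)

lemma is_walk_map:
  "is_walk V E xs \<Longrightarrow> (\<And>x y. E x y \<Longrightarrow> E' (f x) (f y)) \<Longrightarrow> f ` V \<subseteq> V' \<Longrightarrow> is_walk V' E' (map f xs)"
  unfolding is_walk_def by auto blast

lemma gdist_le_walk_length:
  "is_walk V E xs \<Longrightarrow> hd xs = u \<Longrightarrow> last xs = v \<Longrightarrow> gdist V E u v \<le> length xs - 1"
  unfolding gdist_def by (rule Least_le) (cases xs, auto)

lemma gdist_shortest_walk:
  assumes "connected_graph V E" "u \<in> V" "v \<in> V"
  shows "\<exists>xs. is_walk V E xs \<and> hd xs = u \<and> last xs = v \<and> length xs = Suc (gdist V E u v)"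
proof -
  obtain xs where "is_walk V E xs" "hd xs = u" "last xs = v"
    using assms unfolding connected_graph_def by blast
  then have "\<exists>n xs. is_walk V E xs \<and> hd xs = u \<and> last xs = v \<and> length xs = Suc n"
    by (intro exI[of _ "length xs - 1"] exI[of _ xs]) (cases xs, auto)
  then show ?thesis unfolding gdist_def by (rule LeastI_ex)
qed

lemma gdist_refl [simp]: "u \<in> V \<Longrightarrow> gdist V E u u = 0"
  using gdist_le_walk_length[of V E "[u]" u u] by simp

lemma gdist_eq_0_imp_eq:
  assumes "connected_graph V E" "u \<in> V" "v \<in> V" "gdist V E u v = 0"
  shows "u = v"
proof -
  obtain xs where "is_walk V E xs" "hd xs = u" "last xs = v" "length xs = Suc 0"
    using gdist_shortest_walk[OF assms(1-3)] assms(4) by auto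
  then show "u = v" by (cases xs) auto
qed

lemma gdist_le_Suc_gdist_adj:
  assumes "connected_graph V E" "E u v" "u \<in> V" "v \<in> V" "w \<in> V"
  shows "gdist V E u w \<le> Suc (gdist V E v w)"
proof -
  obtain xs where xs: "is_walk V E xs" "hd xs = v" "last xs = w" "length xs = Suc (gdist V E v w)"
    using gdist_shortest_walk[OF assms(1,4,5)] by blast
  then obtain zs where "xs = v # zs" by (cases xs) auto
  with xs assms(2,3) show ?thesis
    using gdist_le_walk_length[of V E "u # xs" u w] by simp
qed

lemma simple_graph_adj_in: "simple_graph V E \<Longrightarrow> E x y \<Longrightarrow> x \<in> V \<and> y \<in> V"
  unfolding simple_graph_def by blast

lemma simple_graph_irrefl: "simple_graph V E \<Longrightarrow> \<not> E x x"
  unfolding simple_graph_def by blast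

lemma gdist_adj:
  assumes s: "simple_graph V E" and c: "connected_graph V E" and e: "E u v"
  shows "gdist V E u v = 1"
proof -
  have uv: "u \<in> V" "v \<in> V" "u \<noteq> v"
    using simple_graph_adj_in[OF s e] simple_graph_irrefl[OF s] e by auto
  then have "gdist V E u v \<le> 1" using gdist_le_Suc_gdist_adj[OF c e uv(1,2) uv(2)] by simp
  moreover have "gdist V E u v \<noteq> 0" using gdist_eq_0_imp_eq[OF c uv(1,2)] uv(3) by blast
  ultimately show ?thesis by simp
qed

lemma cart_prod_walk:
  assumes c1: "connected_graph V1 E1" and c2: "connected_graph V2 E2"
    and a: "a \<in> V1" "c \<in> V1" and b: "b \<in> V2" "d \<in> V2"
  shows "\<exists>W. is_walk (V1 \<times> V2) (cart_prod_adj E1 E2) W \<and> hd W = (a, b) \<and> last W = (c, d)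
     \<and> length W = Suc (gdist V1 E1 a c + gdist V2 E2 b d)"
proof -
  obtain xs where xs: "is_walk V1 E1 xs" "hd xs = a" "last xs = c" "length xs = Suc (gdist V1 E1 a c)"
    using gdist_shortest_walk[OF c1 a] by blast
  obtain ys where ys: "is_walk V2 E2 ys" "hd ys = b" "last ys = d" "length ys = Suc (gdist V2 E2 b d)"
    using gdist_shortest_walk[OF c2 b] by blast
  let ?A = "map (\<lambda>x. (x, b)) xs" and ?B = "map (Pair c) ys"
  have wA: "is_walk (V1 \<times> V2) (cart_prod_adj E1 E2) ?A"
    by (rule is_walk_map[OF xs(1)]) (use b in \<open>auto simp: cart_prod_adj_def\<close>)
  have wB: "is_walk (V1 \<times> V2) (cart_prod_adj E1 E2) ?B"
    by (rule is_walk_map[OF ys(1)]) (use a in \<open>auto simp: cart_prod_adj_def\<close>)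
  have ne: "xs \<noteq> []" "ys \<noteq> []" using xs ys by auto
  have "last ?A = hd ?B" using ne xs ys by (simp add: last_map hd_map)
  then show ?thesis
    using is_walk_append_tl[OF wA wB] last_append_tl[of ?A ?B] ne xs ys
    by (intro exI[of _ "?A @ tl ?B"]) (auto simp: last_map hd_map)
qed

lemma connected_cart_prod:
  assumes "connected_graph V1 E1" "connected_graph V2 E2"
  shows "connected_graph (V1 \<times> V2) (cart_prod_adj E1 E2)"
  using assms cart_prod_walk[OF assms] unfolding connected_graph_def by fastforce

lemma cart_prod_walk_length_ge:
  assumes c1: "connected_graph V1 E1" and c2: "connected_graph V2 E2"
    and "is_walk (V1 \<times> V2) (cart_prod_adj E1 E2) W"
  shows "gdist V1 E1 (fst (hd W)) (fst (last W)) + gdist V2 E2 (snd (hd W)) (snd (last W)) \<le> length W - 1"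
  using assms(3)
proof (induction W rule: induct_list012)
  case (2 x)
  then show ?case by (cases x) auto
next
  case (3 x y zs)
  let ?z = "last (y # zs)"
  have x: "x \<in> V1 \<times> V2" and e: "cart_prod_adj E1 E2 x y"
    and w: "is_walk (V1 \<times> V2) (cart_prod_adj E1 E2) (y # zs)" using "3.prems" by auto
  have yz: "y \<in> V1 \<times> V2" "?z \<in> V1 \<times> V2" using w unfolding is_walk_def by auto
  have IH: "gdist V1 E1 (fst y) (fst ?z) + gdist V2 E2 (snd y) (snd ?z) \<le> length zs"
    using "3.IH"(2)[OF w] by simp
  from e consider "fst x = fst y" "E2 (snd x) (snd y)" | "snd x = snd y" "E1 (fst x) (fst y)"
    unfolding cart_prod_adj_def by blast
  then show ?case
  proof cases
    case 1
    have "gdist V2 E2 (snd x) (snd ?z) \<le> Suc (gdist V2 E2 (snd y) (snd ?z))"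
      using gdist_le_Suc_gdist_adj[OF c2 1(2)] x yz by (simp add: mem_Times_iff)
    with IH 1 show ?thesis by simp
  next
    case 2
    have "gdist V1 E1 (fst x) (fst ?z) \<le> Suc (gdist V1 E1 (fst y) (fst ?z))"
      using gdist_le_Suc_gdist_adj[OF c1 2(2)] x yz by (simp add: mem_Times_iff)
    with IH 2 show ?thesis by simp
  qed
qed simp

lemma gdist_cart_prod:
  assumes c1: "connected_graph V1 E1" and c2: "connected_graph V2 E2"
    and a: "a \<in> V1" "c \<in> V1" and b: "b \<in> V2" "d \<in> V2"
  shows "gdist (V1 \<times> V2) (cart_prod_adj E1 E2) (a, b) (c, d) = gdist V1 E1 a c + gdist V2 E2 b d"
proof (rule antisym)
  obtain W where "is_walk (V1 \<times> V2) (cart_prod_adj E1 E2) W" "hd W = (a, b)" "last W = (c, d)"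
    "length W = Suc (gdist V1 E1 a c + gdist V2 E2 b d)"
    using cart_prod_walk[OF c1 c2 a b] by blast
  then show "gdist (V1 \<times> V2) (cart_prod_adj E1 E2) (a, b) (c, d) \<le> gdist V1 E1 a c + gdist V2 E2 b d"
    using gdist_le_walk_length by fastforce
next
  obtain W where "is_walk (V1 \<times> V2) (cart_prod_adj E1 E2) W" "hd W = (a, b)" "last W = (c, d)"
    "length W = Suc (gdist (V1 \<times> V2) (cart_prod_adj E1 E2) (a, b) (c, d))"
    using gdist_shortest_walk[OF connected_cart_prod[OF c1 c2]] a b by blast
  then show "gdist V1 E1 a c + gdist V2 E2 b d \<le> gdist (V1 \<times> V2) (cart_prod_adj E1 E2) (a, b) (c, d)"
    using cart_prod_walk_length_ge[OF c1 c2] by fastforce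
qed

lemma nbhd_cart_prod:
  assumes "v \<in> V1" "w \<in> V2"
  shows "nbhd (V1 \<times> V2) (cart_prod_adj E1 E2) (v, w) = (\<lambda>x. (x, w)) ` nbhd V1 E1 v \<union> Pair v ` nbhd V2 E2 w"
  using assms by (auto simp: nbhd_def cart_prod_adj_def)

lemma card_nbhd_inter_dist_set_cart_prod:
  assumes s2: "simple_graph V2 E2" and c1: "connected_graph V1 E1" and c2: "connected_graph V2 E2"
    and uv: "u \<in> V1" "v \<in> V1" and w: "w \<in> V2" and fin1: "finite V1"
  shows "card (nbhd (V1 \<times> V2) (cart_prod_adj E1 E2) (v, w) \<inter> dist_set (V1 \<times> V2) (cart_prod_adj E1 E2) (u, w) k)
    = card (nbhd V1 E1 v \<inter> dist_set V1 E1 u k) + (if k = Suc (gdist V1 E1 u v) then card (nbhd V2 E2 w) else 0)"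
proof -
  let ?A = "(\<lambda>x. (x, w)) ` (nbhd V1 E1 v \<inter> dist_set V1 E1 u k)"
  let ?B = "if k = Suc (gdist V1 E1 u v) then Pair v ` nbhd V2 E2 w else {}"
  have horizontal: "gdist (V1 \<times> V2) (cart_prod_adj E1 E2) (u, w) (x, w) = gdist V1 E1 u x" if "x \<in> V1" for x
    using gdist_cart_prod[OF c1 c2 uv(1) that w w] w by simp
  have vertical: "gdist (V1 \<times> V2) (cart_prod_adj E1 E2) (u, w) (v, y) = Suc (gdist V1 E1 u v)"
    if "y \<in> nbhd V2 E2 w" for y
    using that gdist_cart_prod[OF c1 c2 uv w, of y] gdist_adj[OF s2 c2] by (simp add: nbhd_def)
  have "nbhd (V1 \<times> V2) (cart_prod_adj E1 E2) (v, w) \<inter> dist_set (V1 \<times> V2) (cart_prod_adj E1 E2) (u, w) k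
      = ?A \<union> ?B"
    unfolding nbhd_cart_prod[OF uv(2) w]
    using horizontal vertical uv w by (auto simp: dist_set_def nbhd_def)
  moreover have "?A \<inter> ?B = {}" using simple_graph_irrefl[OF s2] by (auto simp: nbhd_def)
  moreover have "finite ?A" "finite ?B"
    using fin1 s2 unfolding simple_graph_def nbhd_def by auto
  moreover have "card ?A = card (nbhd V1 E1 v \<inter> dist_set V1 E1 u k)"
    by (simp add: card_image inj_on_def)
  moreover have "card ?B = (if k = Suc (gdist V1 E1 u v) then card (nbhd V2 E2 w) else 0)"
    by (simp add: card_image inj_on_def)
  ultimately show ?thesis by (simp add: card_Un_disjoint)
qed

lemma distance_regular_cart_prod_factor:
  assumes s2: "simple_graph V2 E2" and c1: "connected_graph V1 E1" and c2: "connected_graph V2 E2"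
    and fin1: "finite V1" and dr: "distance_regular (V1 \<times> V2) (cart_prod_adj E1 E2)"
  shows "distance_regular V1 E1"
  unfolding distance_regular_def Let_def
proof (intro conjI[OF c1] ballI impI)
  fix u v u' v' assume uv: "u \<in> V1" "v \<in> V1" "u' \<in> V1" "v' \<in> V1"
    and eq: "gdist V1 E1 u v = gdist V1 E1 u' v'"
  obtain w where w: "w \<in> V2" using c2 unfolding connected_graph_def by blast
  let ?i = "gdist V1 E1 u v"
  have gdist_lift: "gdist (V1 \<times> V2) (cart_prod_adj E1 E2) (u, w) (v, w) = ?i"
    "gdist (V1 \<times> V2) (cart_prod_adj E1 E2) (u', w) (v', w) = ?i"
    using gdist_cart_prod[OF c1 c2 _ _ w w] uv eq w by auto
  have "(u, w) \<in> V1 \<times> V2" "(v, w) \<in> V1 \<times> V2" "(u', w) \<in> V1 \<times> V2" "(v', w) \<in> V1 \<times> V2"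
    using uv w by auto
  note dr[unfolded distance_regular_def Let_def, THEN conjunct2, rule_format, OF this,
      unfolded gdist_lift card_nbhd_inter_dist_set_cart_prod[OF s2 c1 c2 uv(1,2) w fin1]
        card_nbhd_inter_dist_set_cart_prod[OF s2 c1 c2 uv(3,4) w fin1]]
  then show "card (nbhd V1 E1 v \<inter> dist_set V1 E1 u (?i - 1)) = card (nbhd V1 E1 v' \<inter> dist_set V1 E1 u' (?i - 1)) \<and>
      card (nbhd V1 E1 v \<inter> dist_set V1 E1 u ?i) = card (nbhd V1 E1 v' \<inter> dist_set V1 E1 u' ?i) \<and>
      card (nbhd V1 E1 v \<inter> dist_set V1 E1 u (Suc ?i)) = card (nbhd V1 E1 v' \<inter> dist_set V1 E1 u' (Suc ?i))"
    using eq by simp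
qed

lemma distance_regular_card_2:
  assumes s: "simple_graph V E" and c: "connected_graph V E" and card2: "card V = 2"
  shows "distance_regular V E"
proof -
  obtain a b where V: "V = {a, b}" "a \<noteq> b" using card2 by (meson card_2_iff)
  have adj: "E x y" if xy: "x \<in> V" "y \<in> V" "x \<noteq> y" for x y
  proof -
    obtain xs where xs: "is_walk V E xs" "hd xs = x" "last xs = y"
      using c xy unfolding connected_graph_def by blast
    then obtain z zs where "xs = x # z # zs" using xy by (cases xs; cases "tl xs") auto
    then have "E x z" using xs by simp
    moreover have "z = y"
      using simple_graph_adj_in[OF s \<open>E x z\<close>] simple_graph_irrefl[OF s, of x] \<open>E x z\<close> xy V by auto
    ultimately show ?thesis by simp
  qed
  have gdist_eq: "gdist V E x y = (if x = y then 0 else 1)" if "x \<in> V" "y \<in> V" for x y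
    using that adj gdist_adj[OF s c] by auto
  have count: "card (nbhd V E v \<inter> dist_set V E u k) =
      (if u = v then (if k = 1 then 1 else 0) else (if k = 0 then 1 else 0))"
    if uv: "u \<in> V" "v \<in> V" for u v k
  proof -
    have "nbhd V E v \<inter> dist_set V E u k = {x \<in> V. x \<noteq> v \<and> (if u = x then 0 else 1) = k}"
      using gdist_eq uv adj simple_graph_irrefl[OF s] by (auto simp: nbhd_def dist_set_def)
    also have "\<dots> = (if u = v then (if k = 1 then V - {v} else {}) else (if k = 0 then {u} else {}))"
      using uv V by auto
    finally show ?thesis using card2 uv by (simp add: V(1))
  qed
  show ?thesis unfolding distance_regular_def Let_def
  proof (intro conjI[OF c] ballI impI)
    fix u v u' v' assume uv: "u \<in> V" "v \<in> V" "u' \<in> V" "v' \<in> V"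
      and "gdist V E u v = gdist V E u' v'"
    then have "u = v \<longleftrightarrow> u' = v'" using gdist_eq by (auto split: if_splits)
    then show "card (nbhd V E v \<inter> dist_set V E u (gdist V E u v - 1)) = card (nbhd V E v' \<inter> dist_set V E u' (gdist V E u v - 1)) \<and>
      card (nbhd V E v \<inter> dist_set V E u (gdist V E u v)) = card (nbhd V E v' \<inter> dist_set V E u' (gdist V E u v)) \<and>
      card (nbhd V E v \<inter> dist_set V E u (Suc (gdist V E u v))) = card (nbhd V E v' \<inter> dist_set V E u' (Suc (gdist V E u v)))"
      unfolding count[OF uv(1,2)] count[OF uv(3,4)] by simp
  qed
qed

definition equitable_partition ::
    "'a set \<Rightarrow> ('a \<Rightarrow> 'a \<Rightarrow> bool) \<Rightarrow> 'i set \<Rightarrow> ('i \<Rightarrow> 'i \<Rightarrow> nat) \<Rightarrow> ('i \<Rightarrow> 'a set) \<Rightarrow> bool" where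
  "equitable_partition V E I C P \<longleftrightarrow>
     (\<forall>i\<in>I. P i \<noteq> {} \<and> P i \<subseteq> V) \<and>
     (\<forall>i\<in>I. \<forall>j\<in>I. i \<noteq> j \<longrightarrow> P i \<inter> P j = {}) \<and>
     (\<Union>i\<in>I. P i) = V \<and>
     (\<forall>i\<in>I. \<forall>j\<in>I. \<forall>y\<in>P j. card {x \<in> P i. E y x} = C i j)"

lemma equitable_partition_class_eq:
  "equitable_partition V E I C P \<Longrightarrow> i \<in> I \<Longrightarrow> j \<in> I \<Longrightarrow> x \<in> P i \<Longrightarrow> x \<in> P j \<Longrightarrow> i = j"
  unfolding equitable_partition_def by blast

lemma equitable_partition_subset: "equitable_partition V E I C P \<Longrightarrow> i \<in> I \<Longrightarrow> P i \<subseteq> V"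
  unfolding equitable_partition_def by blast

lemma equitable_partition_nonempty: "equitable_partition V E I C P \<Longrightarrow> i \<in> I \<Longrightarrow> P i \<noteq> {}"
  unfolding equitable_partition_def by blast

lemma equitable_partition_Union: "equitable_partition V E I C P \<Longrightarrow> (\<Union>i\<in>I. P i) = V"
  unfolding equitable_partition_def by blast

lemma equitable_partition_card_neighbours:
  "equitable_partition V E I C P \<Longrightarrow> i \<in> I \<Longrightarrow> j \<in> I \<Longrightarrow> y \<in> P j \<Longrightarrow> card {x \<in> P i. E y x} = C i j"
  unfolding equitable_partition_def by blast

lemma highly_regular_with_iff_equitable_partition:
  "highly_regular_with V E m C \<longleftrightarrow>
     2 \<le> m \<and> (m < card V \<or> m = card V \<and> card V = 2) \<and>
     (\<forall>u\<in>V. \<exists>P. equitable_partition V E {1..m} C P \<and> P 1 = {u})"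
  unfolding highly_regular_with_def equitable_partition_def by blast

lemma equitable_partition_reindex:
  assumes f: "bij_betw f K I" and P: "equitable_partition V E I C P"
  shows "equitable_partition V E K (\<lambda>k l. C (f k) (f l)) (\<lambda>k. P (f k))"
proof -
  have im: "f ` K = I" and inj: "inj_on f K" using f by (auto simp: bij_betw_def)
  have "(\<Union>k\<in>K. P (f k)) = (\<Union>i\<in>I. P i)" using im by blast
  moreover have "k \<noteq> l \<Longrightarrow> f k \<noteq> f l" if "k \<in> K" "l \<in> K" for k l
    using inj that by (auto dest: inj_onD)
  ultimately show ?thesis using P im unfolding equitable_partition_def by (auto; blast)
qed

lemma card_cart_prod_adj_neighbours:
  assumes "finite A" "finite B" "\<And>x. \<not> E2 x x"
  shows "card {x \<in> A \<times> B. cart_prod_adj E1 E2 (y1, y2) x} =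
    (if y2 \<in> B then card {x1 \<in> A. E1 y1 x1} else 0) + (if y1 \<in> A then card {x2 \<in> B. E2 y2 x2} else 0)"
proof -
  let ?S = "if y2 \<in> B then (\<lambda>x1. (x1, y2)) ` {x1 \<in> A. E1 y1 x1} else {}"
  let ?T = "if y1 \<in> A then Pair y1 ` {x2 \<in> B. E2 y2 x2} else {}"
  have "{x \<in> A \<times> B. cart_prod_adj E1 E2 (y1, y2) x} = ?S \<union> ?T"
    by (auto simp: cart_prod_adj_def)
  moreover have "?S \<inter> ?T = {}" using assms(3) by auto
  moreover have "card ?S = (if y2 \<in> B then card {x1 \<in> A. E1 y1 x1} else 0)"
    by (simp add: card_image inj_on_def)
  moreover have "card ?T = (if y1 \<in> A then card {x2 \<in> B. E2 y2 x2} else 0)"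
    by (simp add: card_image inj_on_def)
  ultimately show ?thesis using assms(1,2) by (simp add: card_Un_disjoint)
qed

lemma equitable_partition_cart_prod:
  assumes "finite V1" "finite V2" "\<And>x. \<not> E2 x x"
    and P1: "equitable_partition V1 E1 I C1 P1" and P2: "equitable_partition V2 E2 J C2 P2"
  shows "equitable_partition (V1 \<times> V2) (cart_prod_adj E1 E2) (I \<times> J)
     (\<lambda>(i, j) (k, l). (if j = l then C1 i k else 0) + (if i = k then C2 j l else 0))
     (\<lambda>(i, j). P1 i \<times> P2 j)"
proof -
  have count: "card {x \<in> P1 i \<times> P2 j. cart_prod_adj E1 E2 (y1, y2) x} =
      (if j = l then C1 i k else 0) + (if i = k then C2 j l else 0)"
    if "i \<in> I" "k \<in> I" "j \<in> J" "l \<in> J" "y1 \<in> P1 k" "y2 \<in> P2 l" for i j k l y1 y2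
  proof -
    have mem: "(y2 \<in> P2 j) = (j = l)" "(y1 \<in> P1 i) = (i = k)"
      using that equitable_partition_class_eq[OF P2, of j l y2] equitable_partition_class_eq[OF P1, of i k y1]
      by auto
    have fin: "finite (P1 i)" "finite (P2 j)"
      using finite_subset[OF equitable_partition_subset[OF P1 that(1)] assms(1)]
        finite_subset[OF equitable_partition_subset[OF P2 that(3)] assms(2)] .
    have cards: "card {x \<in> P1 i. E1 y1 x} = C1 i k" "card {x \<in> P2 j. E2 y2 x} = C2 j l"
      using equitable_partition_card_neighbours[OF P1 that(1,2,5)]
        equitable_partition_card_neighbours[OF P2 that(3,4,6)] .
    have "card {x \<in> P1 i \<times> P2 j. cart_prod_adj E1 E2 (y1, y2) x} =
        (if y2 \<in> P2 j then card {x \<in> P1 i. E1 y1 x} else 0) + (if y1 \<in> P1 i then card {x \<in> P2 j. E2 y2 x} else 0)"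
      using fin assms(3) by (rule card_cart_prod_adj_neighbours)
    then show ?thesis by (simp only: mem cards)
  qed
  have "(\<Union>(i, j)\<in>I \<times> J. P1 i \<times> P2 j) = (\<Union>i\<in>I. P1 i) \<times> (\<Union>j\<in>J. P2 j)" by blast
  also have "\<dots> = V1 \<times> V2" unfolding equitable_partition_Union[OF P1] equitable_partition_Union[OF P2] ..
  finally have union: "(\<Union>(i, j)\<in>I \<times> J. P1 i \<times> P2 j) = V1 \<times> V2" .
  have classes: "\<forall>p\<in>I \<times> J. (case p of (i, j) \<Rightarrow> P1 i \<times> P2 j) \<noteq> {} \<and> (case p of (i, j) \<Rightarrow> P1 i \<times> P2 j) \<subseteq> V1 \<times> V2"
    using equitable_partition_nonempty[OF P1] equitable_partition_nonempty[OF P2]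
      equitable_partition_subset[OF P1] equitable_partition_subset[OF P2] by fast
  have disjoint: "\<forall>p\<in>I \<times> J. \<forall>q\<in>I \<times> J. p \<noteq> q \<longrightarrow> (case p of (i, j) \<Rightarrow> P1 i \<times> P2 j) \<inter> (case q of (i, j) \<Rightarrow> P1 i \<times> P2 j) = {}"
    using equitable_partition_class_eq[OF P1] equitable_partition_class_eq[OF P2] by fast
  show ?thesis
    unfolding equitable_partition_def using union classes disjoint count by fastforce
qed

lemma bij_betw_div_mod_index:
  fixes m n :: nat
  assumes "0 < n"
  shows "bij_betw (\<lambda>k. ((k - 1) div n + 1, (k - 1) mod n + 1)) {1..m * n} ({1..m} \<times> {1..n})"
proof (rule bij_betw_byWitness[where f' = "\<lambda>(a, c). (a - 1) * n + c"], safe)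
  fix k assume k: "k \<in> {1..m * n}"
  then show "((k - 1) div n + 1 - 1) * n + ((k - 1) mod n + 1) = k"
    by (simp add: mult.commute)
  have "(k - 1) div n < m" using k by (auto simp: less_mult_imp_div_less)
  then show "(k - 1) div n + 1 \<in> {1..m}" by simp
  show "(k - 1) mod n + 1 \<in> {1..n}" using assms by (simp add: Suc_le_eq)
next
  fix a c assume a: "a \<in> {1..m}" and c: "c \<in> {1..n}"
  obtain a' c' where ac: "a = Suc a'" "c = Suc c'" using a c by (cases a; cases c) auto
  have "c' < n" using c ac by simp
  then show "((a - 1) * n + c - 1) div n + 1 = a" and "((a - 1) * n + c - 1) mod n + 1 = c"
    using ac by (simp_all add: add.commute)
  have "(a - 1) * n + c \<le> a * n" using ac c by simp
  also have "\<dots> \<le> m * n" using a by simp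
  finally show "(a - 1) * n + c \<in> {1..m * n}" using c by simp
qed

lemma highly_regular_cart_prod:
  assumes s1: "simple_graph V1 E1" and s2: "simple_graph V2 E2"
    and h1: "highly_regular_with V1 E1 m1 C1" and h2: "highly_regular_with V2 E2 m2 C2"
    and size: "m1 * m2 < card V1 * card V2"
  shows "highly_regular (V1 \<times> V2) (cart_prod_adj E1 E2)"
proof -
  have m1: "2 \<le> m1" and m2: "2 \<le> m2"
    using h1 h2 unfolding highly_regular_with_iff_equitable_partition by auto
  have fin: "finite V1" "finite V2" and irr: "\<And>x. \<not> E2 x x"
    using s1 s2 unfolding simple_graph_def by auto
  define idx where "idx k = ((k - 1) div m2 + 1, (k - 1) mod m2 + 1)" for k
  define C :: "(nat \<times> nat) \<Rightarrow> (nat \<times> nat) \<Rightarrow> nat"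
    where "C = (\<lambda>(i, j) (k, l). (if j = l then C1 i k else 0) + (if i = k then C2 j l else 0))"
  have idx: "bij_betw idx {1..m1 * m2} ({1..m1} \<times> {1..m2})"
    unfolding idx_def using bij_betw_div_mod_index m2 by simp
  have "highly_regular_with (V1 \<times> V2) (cart_prod_adj E1 E2) (m1 * m2) (\<lambda>k l. C (idx k) (idx l))"
    unfolding highly_regular_with_iff_equitable_partition
  proof (intro conjI ballI)
    show "2 \<le> m1 * m2" using m1 m2 mult_le_mono[of 1 m1 2 m2] by simp
    show "m1 * m2 < card (V1 \<times> V2) \<or> m1 * m2 = card (V1 \<times> V2) \<and> card (V1 \<times> V2) = 2"
      using size by (simp add: card_cartesian_product)
  next
    fix u assume "u \<in> V1 \<times> V2"
    then obtain P1 P2 where P1: "equitable_partition V1 E1 {1..m1} C1 P1" "P1 1 = {fst u}"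
      and P2: "equitable_partition V2 E2 {1..m2} C2 P2" "P2 1 = {snd u}"
      using h1 h2 unfolding highly_regular_with_iff_equitable_partition by force
    let ?P = "\<lambda>k. (\<lambda>(i, j). P1 i \<times> P2 j) (idx k)"
    have "equitable_partition (V1 \<times> V2) (cart_prod_adj E1 E2) {1..m1 * m2} (\<lambda>k l. C (idx k) (idx l)) ?P"
      using equitable_partition_reindex[OF idx equitable_partition_cart_prod[OF fin irr P1(1) P2(1)]]
      unfolding C_def .
    moreover have "?P 1 = {u}" using P1(2) P2(2) by (simp add: idx_def)
    ultimately show "\<exists>P. equitable_partition (V1 \<times> V2) (cart_prod_adj E1 E2) {1..m1 * m2} (\<lambda>k l. C (idx k) (idx l)) P \<and> P 1 = {u}"
      by blast
  qed
  then show ?thesis unfolding highly_regular_def by blast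
qed

theorem propositionA2:
  fixes V1 :: "'a set" and E1 :: "'a \<Rightarrow> 'a \<Rightarrow> bool"
    and V2 :: "'b set" and E2 :: "'b \<Rightarrow> 'b \<Rightarrow> bool"
  assumes "simple_graph V1 E1" and "simple_graph V2 E2"
    and "connected_graph V1 E1" and "highly_regular V1 E1" and "\<not> distance_regular V1 E1"
    and "connected_graph V2 E2" and "highly_regular V2 E2"
  shows "connected_graph (V1 \<times> V2) (cart_prod_adj E1 E2)
       \<and> highly_regular (V1 \<times> V2) (cart_prod_adj E1 E2)
       \<and> \<not> distance_regular (V1 \<times> V2) (cart_prod_adj E1 E2)"
proof (intro conjI)
  show "connected_graph (V1 \<times> V2) (cart_prod_adj E1 E2)"
    using connected_cart_prod assms(3,6) by blast
  have "finite V1" using assms(1) unfolding simple_graph_def by blast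
  then show "\<not> distance_regular (V1 \<times> V2) (cart_prod_adj E1 E2)"
    using distance_regular_cart_prod_factor assms(2,3,5,6) by blast
  obtain m1 C1 m2 C2 where h1: "highly_regular_with V1 E1 m1 C1" and h2: "highly_regular_with V2 E2 m2 C2"
    using assms(4,7) unfolding highly_regular_def by blast
  have "card V1 \<noteq> 2" using distance_regular_card_2 assms(1,3,5) by blast
  then have "m1 < card V1" and "m2 \<le> card V2" and "2 \<le> m2"
    using h1 h2 unfolding highly_regular_with_def by auto
  then have "m1 * m2 < card V1 * card V2"
    by (meson le_less_trans mult_le_mono2 mult_less_mono1 less_le_trans zero_less_numeral)
  then show "highly_regular (V1 \<times> V2) (cart_prod_adj E1 E2)"
    using highly_regular_cart_prod[OF assms(1,2) h1 h2] by blast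
qed

end
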